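(* Let $G$ be a flattened grammar and $\mathrm{CPS}(G)$ its CPS transformation (with respect to an arbitrary fixed choice of CPS-triggering nonterminals). Then: (1) For every symbol $X$ of $G$ and every terminal string $\lambda\in\Sigma^*$, if $X\Rightarrow^*\lambda$ in $G$ in $n$ steps, then $\hat X\Rightarrow^*\lambda\,\tau_X$ in $\mathrm{CPS}(G)$ in $n$ steps. (2) For every dotted production $\Pi = X\to\alpha_1\cdots\alpha_{i-1}\cdot\alpha_i\cdots\alpha_r$ of $G$ and every $\lambda\in\Sigma^*$, if $\alpha_i\cdots\alpha_r\Rightarrow^*\lambda$ in $G$ in $n$ steps, then $\tau_\Pi\Rightarrow^*\lambda\,\tau_X$ in $\mathrm{CPS}(G)$ in $n$ steps.
   Context: BNF grammars and flattening. A BNF grammar over terminals $\Sigma$ is a list of rules $X\to e$, where $X$ is a nonterminal (called top-level) and $e$ is an expression: a single symbol; a concatenation $e_1\cdots e_n$ ($n\ge 0$, the case $n=0$ being $\varepsilon$); an alternation $e_1\mid\cdots\mid e_n$; an optional $e_1?$; or a repetition $e_1^*$. The procedure $\mathrm{Flatten}(X,e)$ emits context-free productions: (i) if $e=\alpha$ is a single symbol, emit $X\to\alpha$; (ii) if $e=e_1\cdots e_n$, for each $i$ let $\alpha_i=e_i$ if $e_i$ is a single symbol, and otherwise let $\alpha_i$ be a fresh nonterminal and call $\mathrm{Flatten}(\alpha_i,e_i)$; emit $X\to\alpha_1\cdots\alpha_n$; (iii) if $e=e_1\mid\cdots\mid e_n$, call $\mathrm{Flatten}(X,e_i)$ for each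 $i$; (iv) if $e=e_1?$, call $\mathrm{Flatten}(X,e_1\mid\varepsilon)$; (v) if $e=e_1^*$, let $\alpha$ be fresh, call $\mathrm{Flatten}(\alpha,e_1)$ and emit $X\to\alpha X$ and $X\to\varepsilon$. The flattened grammar $G$ consists of all productions emitted by $\mathrm{Flatten}(X,e)$ over all rules $X\to e$; its start symbol $S$ is a top-level nonterminal. CPS transformation. A nonterminal is CPS-eligible if it was created as a fresh symbol during flattening. Fix an arbitrary subset of the CPS-eligible nonterminals, called CPS-triggering (terminals and top-level nonterminals are never CPS-triggering). For every nonterminal $Y$ let $\hat Y$ be a new symbol; for a terminal $\sigma$ set $\hat\sigma=\sigma$. Define mutually recursive procedures. $\mathrm{CPSProd}(X\to\alpha_1\cdots\alpha_i\cdot\alpha_{i+1}\cdots\alpha_r,\ \tau)$, where $\tau$ is a string of symbols: if $i=0$, add the production $\hat X\to\tau$ to $\mathrm{CPS}(G)$; if $i>0$ and $\alpha_i$ is not CPS-triggering, call $\mathrm{CPSProd}(X\to\alpha_1\cdots\alpha_{i-1}\cdot\alpha_i\cdots\alpha_r,\ \hat\alpha_i\tau)$; if $i>0$, $\alpha_i$ is CPS-triggering, $i=r$ and $X=\alpha_r$ (i.e. the dotted production has the form $\alpha\to\gamma\alpha\,\cdot$), call $\mathrm{CPSProd}(X\to\alpha_1\cdots\alpha_{r-1}\cdot\alpha_r,\ \hat\alpha_r)$; otherwise ($\alpha_i$ CPS-triggering, not of that form) call $\mathrm{CPSSym}(\alpha_i,\tau)$ and then $\mathrm{CPSProd}(X\to\alpha_1\cdots\alpha_{i-1}\cdot\alpha_i\cdots\alpha_r,\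 \hat\alpha_i)$. $\mathrm{CPSSym}(X,\tau)$: for each production $X\to\eta$ of $G$, call $\mathrm{CPSProd}(X\to\eta\,\cdot,\ \tau)$. The grammar $\mathrm{CPS}(G)$ consists of all productions added when $\mathrm{CPSSym}(X,\varepsilon)$ is called for every non-CPS-triggering nonterminal $X$; its start symbol is $\hat S$. Tail contexts. During this transformation $\mathrm{CPSSym}(X,\cdot)$ is invoked exactly once for each nonterminal $X$, and $\mathrm{CPSProd}(\Pi,\cdot)$ exactly once for each dotted production $\Pi$ of $G$. For a nonterminal $X$, $\tau_X$ denotes the second argument of that invocation of $\mathrm{CPSSym}(X,\cdot)$; for a terminal $X$, $\tau_X=\varepsilon$. For a dotted production $\Pi$, $\tau_\Pi$ is the second argument of the invocation $\mathrm{CPSProd}(\Pi,\cdot)$. "$A\Rightarrow^* w$ in $n$ steps" means there is a derivation from $A$ to $w$ using exactly $n$ production applications. *)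

theory Defs
  imports Main
begin

text \<open>A fresh nonterminal is named by the index of the BNF rule in which
  it was created and by the tree position (path) of the subexpression it stands for;
  this guarantees freshness.\<close>

datatype 'n nt = Top 'n | Fresh nat "nat list"

datatype ('t, 'n) sym = T 't | N "'n nt"

datatype ('t, 'n) csym = CT 't | Hat "'n nt"

fun hat :: "('t, 'n) sym \<Rightarrow> ('t, 'n) csym" where
  "hat (T a) = CT a"
| "hat (N Y) = Hat Y"

datatype ('t, 'n) rexp =
    RT 't | RN 'n
  | Conc "('t, 'n) rexp list"
  | Alt "('t, 'n) rexp list"
  | Opt "('t, 'n) rexp"
  | Star "('t, 'n) rexp"

type_synonym ('t, 'n) bnf_grammar = "('n \<times> ('t, 'n) rexp) list"

type_synonym 's prods = "('s \<times> 's list) set"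

fun atom :: "('t, 'n) rexp \<Rightarrow> ('t, 'n) sym option" where
  "atom (RT a) = Some (T a)"
| "atom (RN n) = Some (N (Top n))"
| "atom _ = None"

text \<open>Symbols \<open>\<alpha>_i\<close> of the concatenation production (0-based index \<open>i\<close>).\<close>
definition concSyms :: "nat \<Rightarrow> nat list \<Rightarrow> ('t, 'n) rexp list \<Rightarrow> ('t, 'n) sym list" where
  "concSyms k p es = map (\<lambda>(i, e). case atom e of Some s \<Rightarrow> s | None \<Rightarrow> N (Fresh k (p @ [i])))
                         (zip [0..<length es] es)"

text \<open>\<open>flatten k X p e\<close> = Flatten(X,e), where \<open>k\<close> is the rule index and \<open>p\<close> the
  position of \<open>e\<close> in the rule's expression tree (used to generate fresh names).\<close>
fun flatten :: "nat \<Rightarrow> 'n nt \<Rightarrow> nat list \<Rightarrow> ('t, 'n) rexp \<Rightarrow> ('t, 'n) sym prods"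
and flattenConc :: "nat \<Rightarrow> nat list \<Rightarrow> nat \<Rightarrow> ('t, 'n) rexp list \<Rightarrow> ('t, 'n) sym prods"
and flattenAlt :: "nat \<Rightarrow> 'n nt \<Rightarrow> nat list \<Rightarrow> nat \<Rightarrow> ('t, 'n) rexp list \<Rightarrow> ('t, 'n) sym prods"
where
  "flatten k X p (RT a) = {(N X, [T a])}"
| "flatten k X p (RN n) = {(N X, [N (Top n)])}"
| "flatten k X p (Conc es) = {(N X, concSyms k p es)} \<union> flattenConc k p 0 es"
| "flatten k X p (Alt es) = flattenAlt k X p 0 es"
| "flatten k X p (Opt e) = flatten k X (p @ [0]) e \<union> {(N X, [])}"
| "flatten k X p (Star e) =
     flatten k (Fresh k (p @ [0])) (p @ [0]) e \<union> {(N X, [N (Fresh k (p @ [0])), N X]), (N X, [])}"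
| "flattenConc k p j [] = {}"
| "flattenConc k p j (e # es) =
     (case atom e of Some _ \<Rightarrow> {} | None \<Rightarrow> flatten k (Fresh k (p @ [j])) (p @ [j]) e)
     \<union> flattenConc k p (Suc j) es"
| "flattenAlt k X p j [] = {}"
| "flattenAlt k X p j (e # es) = flatten k X (p @ [j]) e \<union> flattenAlt k X p (Suc j) es"

text \<open>Note: \<open>Opt e\<close> is Flatten(X, e | \<open>\<epsilon>\<close>) written out (the \<open>\<epsilon>\<close> branch emits \<open>X \<rightarrow> \<epsilon>\<close>).\<close>

definition flattenGrammar :: "('t, 'n) bnf_grammar \<Rightarrow> ('t, 'n) sym prods" where
  "flattenGrammar rules = (\<Union>k<length rules. flatten k (Top (fst (rules ! k))) [] (snd (rules ! k)))"

definition syms :: "'s prods \<Rightarrow> 's set" where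
  "syms P = {s. \<exists>A \<beta>. (A, \<beta>) \<in> P \<and> (s = A \<or> s \<in> set \<beta>)}"

definition cps_eligible :: "('t, 'n) sym prods \<Rightarrow> 'n nt \<Rightarrow> bool" where
  "cps_eligible G Y \<longleftrightarrow> (\<exists>k p. Y = Fresh k p) \<and> N Y \<in> syms G"

definition step :: "'s prods \<Rightarrow> 's list \<Rightarrow> 's list \<Rightarrow> bool" where
  "step P u v \<longleftrightarrow> (\<exists>l r A \<beta>. (A, \<beta>) \<in> P \<and> u = l @ A # r \<and> v = l @ \<beta> @ r)"

definition derivesN :: "'s prods \<Rightarrow> nat \<Rightarrow> 's list \<Rightarrow> 's list \<Rightarrow> bool" where
  "derivesN P n u v \<longleftrightarrow> (step P ^^ n) u v"

text \<open>Invocations: \<open>SymCall X\<close> is CPSSym(X,_) and \<open>ProdCall X \<eta> j\<close> is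
  CPSProd(\<open>X \<rightarrow> \<eta>\<close> with the dot after the first \<open>j\<close> symbols, _).\<close>
datatype ('t, 'n) call = SymCall "'n nt" | ProdCall "'n nt" "('t, 'n) sym list" nat

definition trig :: "'n nt set \<Rightarrow> ('t, 'n) sym \<Rightarrow> bool" where
  "trig Trig s \<longleftrightarrow> (\<exists>Y. s = N Y \<and> Y \<in> Trig)"

inductive cps_call :: "('t, 'n) sym prods \<Rightarrow> 'n nt set \<Rightarrow> ('t, 'n) call \<Rightarrow> ('t, 'n) csym list \<Rightarrow> bool"
  for G Trig where
  top: "N Y \<in> syms G \<Longrightarrow> Y \<notin> Trig \<Longrightarrow> cps_call G Trig (SymCall Y) []"
| sym: "cps_call G Trig (SymCall X) \<tau> \<Longrightarrow> (N X, \<eta>) \<in> G \<Longrightarrow>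
        cps_call G Trig (ProdCall X \<eta> (length \<eta>)) \<tau>"
| nontrig: "cps_call G Trig (ProdCall X \<eta> (Suc j)) \<tau> \<Longrightarrow> Suc j \<le> length \<eta> \<Longrightarrow>
        \<not> trig Trig (\<eta> ! j) \<Longrightarrow>
        cps_call G Trig (ProdCall X \<eta> j) (hat (\<eta> ! j) # \<tau>)"
| selfloop: "cps_call G Trig (ProdCall X \<eta> (Suc j)) \<tau> \<Longrightarrow> Suc j = length \<eta> \<Longrightarrow>
        \<eta> ! j = N X \<Longrightarrow> X \<in> Trig \<Longrightarrow>
        cps_call G Trig (ProdCall X \<eta> j) [Hat X]"
| trig_sym: "cps_call G Trig (ProdCall X \<eta> (Suc j)) \<tau> \<Longrightarrow> Suc j \<le> length \<eta> \<Longrightarrow>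
        \<eta> ! j = N Y \<Longrightarrow> Y \<in> Trig \<Longrightarrow> \<not> (Suc j = length \<eta> \<and> Y = X) \<Longrightarrow>
        cps_call G Trig (SymCall Y) \<tau>"
| trig_prod: "cps_call G Trig (ProdCall X \<eta> (Suc j)) \<tau> \<Longrightarrow> Suc j \<le> length \<eta> \<Longrightarrow>
        \<eta> ! j = N Y \<Longrightarrow> Y \<in> Trig \<Longrightarrow> \<not> (Suc j = length \<eta> \<and> Y = X) \<Longrightarrow>
        cps_call G Trig (ProdCall X \<eta> j) [Hat Y]"

text \<open>Productions added: when CPSProd is called with the dot at position 0.\<close>
definition cpsGrammar :: "('t, 'n) sym prods \<Rightarrow> 'n nt set \<Rightarrow> ('t, 'n) csym prods" where
  "cpsGrammar G Trig = {(Hat X, \<tau>) | X \<eta> \<tau>. cps_call G Trig (ProdCall X \<eta> 0) \<tau>}"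

definition tauSym :: "('t, 'n) sym prods \<Rightarrow> 'n nt set \<Rightarrow> ('t, 'n) sym \<Rightarrow> ('t, 'n) csym list" where
  "tauSym G Trig X = (case X of T _ \<Rightarrow> [] | N Y \<Rightarrow> (THE \<tau>. cps_call G Trig (SymCall Y) \<tau>))"

definition tauProd :: "('t, 'n) sym prods \<Rightarrow> 'n nt set \<Rightarrow> 'n nt \<Rightarrow> ('t, 'n) sym list \<Rightarrow> nat
    \<Rightarrow> ('t, 'n) csym list" where
  "tauProd G Trig X \<eta> j = (THE \<tau>. cps_call G Trig (ProdCall X \<eta> j) \<tau>)"

end

theory Submission
  imports Defs
begin

text \<open>
  The tail contexts are well defined because a CPS-triggering nonterminal \<open>Y\<close> is fresh, and a
  fresh nonterminal occurs in exactly one right-hand-side position other than the tail of a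
  repetition production \<open>Y \<rightarrow> \<alpha> Y\<close>. That occurrence is the unique invocation of
  CPSSym(\<open>Y\<close>, _), and it lies in a production whose left-hand side was created at a strictly
  shallower position, so the invocations are well founded.

  Both claims are then proved together by induction on the number of steps. A derivation from
  \<open>\<alpha>\<^sub>i \<dots> \<alpha>\<^sub>r\<close> splits into one from \<open>\<alpha>\<^sub>i\<close> and one from the rest, which is
  simulated from the tail context \<open>\<tau>'\<close> of the next dotted production. If \<open>\<alpha>\<^sub>i\<close> is not
  triggering, the tail context of the current dotted production is \<open>\<alpha>\<^sub>i\<close>-hat followed by
  \<open>\<tau>'\<close> while that of \<open>\<alpha>\<^sub>i\<close> is empty, and the two simulations are concatenated. If it is
  triggering, the current tail context is just \<open>\<alpha>\<^sub>i\<close>-hat while that of \<open>\<alpha>\<^sub>i\<close> is \<open>\<tau>'\<close>, so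
  the simulation of \<open>\<alpha>\<^sub>i\<close> ends exactly where the simulation of the rest begins. A derivation
  from a nonterminal \<open>X\<close> starts with some \<open>X \<rightarrow> \<eta>\<close>, whose image \<open>X\<close>-hat \<open>\<rightarrow>\<close>
  \<open>\<tau>\<close>, with \<open>\<tau>\<close> the tail context of \<open>X \<rightarrow> \<cdot>\<eta>\<close>, is a production of CPS(G).
\<close>

lemma derivesN_0 [simp]: "derivesN P 0 u v \<longleftrightarrow> u = v"
  by (simp add: derivesN_def)

lemma derivesN_Suc: "derivesN P (Suc n) u v \<longleftrightarrow> (\<exists>x. step P u x \<and> derivesN P n x v)"
  unfolding derivesN_def by (meson relpowp_Suc_D2 relpowp_Suc_I2)

lemma derivesN_add: "derivesN P m u v \<Longrightarrow> derivesN P n v w \<Longrightarrow> derivesN P (m + n) u w"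
  unfolding derivesN_def relpowp_add by auto

lemma step_singleton: "step P [A] \<beta> \<longleftrightarrow> (A, \<beta>) \<in> P"
  unfolding step_def by (auto simp: Cons_eq_append_conv)

lemma step_append_iff: "step P (u @ v) x \<longleftrightarrow>
    (\<exists>u'. step P u u' \<and> x = u' @ v) \<or> (\<exists>v'. step P v v' \<and> x = u @ v')"
proof
  assume "step P (u @ v) x"
  then obtain l r A \<beta> where p: "(A, \<beta>) \<in> P" and uv: "u @ v = l @ A # r" and x: "x = l @ \<beta> @ r"
    unfolding step_def by blast
  from uv obtain us where "u = l @ us \<and> us @ v = A # r \<or> u @ us = l \<and> v = us @ A # r"
    by (auto simp: append_eq_append_conv2)
  then consider us where "u = l @ A # us" "r = us @ v" | us where "l = u @ us" "v = us @ A # r"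
    by (metis append_Nil append_Nil2 Cons_eq_append_conv)
  then show "(\<exists>u'. step P u u' \<and> x = u' @ v) \<or> (\<exists>v'. step P v v' \<and> x = u @ v')"
  proof cases
    case (1 us)
    then have "step P u (l @ \<beta> @ us)" using p unfolding step_def by blast
    with 1 x show ?thesis by auto
  next
    case (2 us)
    then have "step P v (us @ \<beta> @ r)" using p unfolding step_def by blast
    with 2 x show ?thesis by auto
  qed
next
  show "(\<exists>u'. step P u u' \<and> x = u' @ v) \<or> (\<exists>v'. step P v v' \<and> x = u @ v') \<Longrightarrow> step P (u @ v) x"
    unfolding step_def by (metis append.assoc append_Cons)
qed

lemma derivesN_append_split:
  "derivesN P n (u @ v) z \<Longrightarrow>
     \<exists>n1 n2 z1 z2. n = n1 + n2 \<and> z = z1 @ z2 \<and> derivesN P n1 u z1 \<and> derivesN P n2 v z2"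
proof (induction n arbitrary: u v)
  case (Suc n)
  then obtain x where "step P (u @ v) x" "derivesN P n x z" by (auto simp: derivesN_Suc)
  then consider u' where "step P u u'" "derivesN P n (u' @ v) z"
    | v' where "step P v v'" "derivesN P n (u @ v') z"
    by (auto simp: step_append_iff)
  then show ?case
  proof cases
    case (1 u')
    with Suc.IH obtain n1 n2 z1 z2 where "n = n1 + n2" "z = z1 @ z2" "derivesN P n1 u' z1" "derivesN P n2 v z2"
      by blast
    with 1 show ?thesis by (intro exI[of _ "Suc n1"] exI[of _ n2] exI[of _ z1] exI[of _ z2]) (auto simp: derivesN_Suc)
  next
    case (2 v')
    with Suc.IH obtain n1 n2 z1 z2 where "n = n1 + n2" "z = z1 @ z2" "derivesN P n1 u z1" "derivesN P n2 v' z2"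
      by blast
    with 2 show ?thesis by (intro exI[of _ n1] exI[of _ "Suc n2"] exI[of _ z1] exI[of _ z2]) (auto simp: derivesN_Suc)
  qed
qed simp

lemma derivesN_append_right: "derivesN P n u u' \<Longrightarrow> derivesN P n (u @ v) (u' @ v)"
  by (induction n arbitrary: u) (auto simp: derivesN_Suc step_append_iff)

lemma derivesN_prepend: "derivesN P n v v' \<Longrightarrow> derivesN P n (u @ v) (u @ v')"
  by (induction n arbitrary: v) (auto simp: derivesN_Suc step_append_iff)

lemma derivesN_append:
  "derivesN P m u u' \<Longrightarrow> derivesN P n v v' \<Longrightarrow> derivesN P (m + n) (u @ v) (u' @ v')"
  by (blast intro: derivesN_add derivesN_append_right derivesN_prepend)

lemma derivesN_Nil: "derivesN P n [] z \<longleftrightarrow> n = 0 \<and> z = []"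
  by (cases n) (auto simp: derivesN_Suc step_def)

lemma derivesN_no_production:
  "(\<And>\<beta>. (A, \<beta>) \<notin> P) \<Longrightarrow> derivesN P n [A] z \<longleftrightarrow> n = 0 \<and> z = [A]"
  by (cases n) (auto simp: derivesN_Suc step_singleton)

section \<open>Call sites\<close>

lemma lhs_in_syms: "(A, \<beta>) \<in> P \<Longrightarrow> A \<in> syms P"
  by (auto simp: syms_def)

lemma rhs_in_syms: "(A, \<beta>) \<in> P \<Longrightarrow> s \<in> set \<beta> \<Longrightarrow> s \<in> syms P"
  by (auto simp: syms_def)

lemma syms_empty [simp]: "syms {} = {}"
  by (simp add: syms_def)

lemma syms_Un [simp]: "syms (P \<union> Q) = syms P \<union> syms Q"
  by (auto simp: syms_def)

lemma syms_insert [simp]: "syms (insert (A, \<beta>) P) = insert A (set \<beta> \<union> syms P)"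
  by (auto simp: syms_def)

lemma syms_UN: "syms (\<Union>k\<in>K. P k) = (\<Union>k\<in>K. syms (P k))"
  by (auto simp: syms_def)

text \<open>The occurrences of \<open>Y\<close> from which CPSProd invokes CPSSym(\<open>Y\<close>, _) when \<open>Y\<close> is
  CPS-triggering: all right-hand-side occurrences except the tail of \<open>X \<rightarrow> \<gamma>X\<close>.\<close>

definition call_site :: "('t, 'n) sym prods \<Rightarrow> 'n nt \<Rightarrow> 'n nt \<Rightarrow> ('t, 'n) sym list \<Rightarrow> nat \<Rightarrow> bool" where
  "call_site P Y X \<eta> j \<longleftrightarrow>
     (N X, \<eta>) \<in> P \<and> j < length \<eta> \<and> \<eta> ! j = N Y \<and> \<not> (Suc j = length \<eta> \<and> Y = X)"

lemma call_site_mono: "call_site P Y X \<eta> j \<Longrightarrow> P \<subseteq> Q \<Longrightarrow> call_site Q Y X \<eta> j"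
  by (auto simp: call_site_def)

lemma call_site_empty [simp]: "\<not> call_site {} Y X \<eta> j"
  by (simp add: call_site_def)

lemma call_site_Un [simp]: "call_site (P \<union> Q) Y X \<eta> j \<longleftrightarrow> call_site P Y X \<eta> j \<or> call_site Q Y X \<eta> j"
  by (auto simp: call_site_def)

lemma call_site_insert [simp]:
  "call_site (insert (N A, \<beta>) P) Y X \<eta> j \<longleftrightarrow>
     X = A \<and> \<eta> = \<beta> \<and> j < length \<beta> \<and> \<beta> ! j = N Y \<and> \<not> (Suc j = length \<beta> \<and> Y = A)
     \<or> call_site P Y X \<eta> j"
  by (auto simp: call_site_def)

lemma call_site_UN [simp]: "call_site (\<Union>k\<in>K. P k) Y X \<eta> j \<longleftrightarrow> (\<exists>k\<in>K. call_site (P k) Y X \<eta> j)"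
  by (auto simp: call_site_def)

definition unique_call_sites :: "('t, 'n) sym prods \<Rightarrow> 'n nt set \<Rightarrow> bool" where
  "unique_call_sites P S \<longleftrightarrow> (\<forall>Y\<in>S. \<forall>X \<eta> j X' \<eta>' j'.
     call_site P Y X \<eta> j \<longrightarrow> call_site P Y X' \<eta>' j' \<longrightarrow> X' = X \<and> \<eta>' = \<eta> \<and> j' = j)"

lemma unique_call_sites_Un:
  assumes "unique_call_sites P S" "unique_call_sites Q S"
    and "\<And>Y X \<eta> j X' \<eta>' j'. Y \<in> S \<Longrightarrow> call_site P Y X \<eta> j \<Longrightarrow> \<not> call_site Q Y X' \<eta>' j'"
  shows "unique_call_sites (P \<union> Q) S"
  using assms unfolding unique_call_sites_def by (metis call_site_Un)

definition callers :: "('t, 'n) sym prods \<Rightarrow> 'n nt set \<Rightarrow> 'n nt rel" where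
  "callers P S = {(X, Y). Y \<in> S \<and> (\<exists>\<eta> j. call_site P Y X \<eta> j)}"

lemma callers_empty [simp]: "callers {} S = {}"
  by (simp add: callers_def)

lemma callers_Un [simp]: "callers (P \<union> Q) S = callers P S \<union> callers Q S"
  by (auto simp: callers_def)

section \<open>Tail contexts and the simulation\<close>

text \<open>The conditions on call sites say exactly that CPSSym(\<open>Y\<close>, _) is invoked once for every
  CPS-triggering \<open>Y\<close>.\<close>

locale cps_grammar =
  fixes G :: "('t, 'n) sym prods" and Trig :: "'n nt set"
  assumes no_terminal_lhs: "(T a, \<beta>) \<notin> G"
    and call_sites_unique: "unique_call_sites G Trig"
    and call_site_exists: "Y \<in> Trig \<Longrightarrow> N Y \<in> syms G \<Longrightarrow> \<exists>X \<eta> j. call_site G Y X \<eta> j"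
    and wf_callers: "wf (callers G Trig)"
begin

lemma cps_call_ProdCall_production:
  "cps_call G Trig (ProdCall X \<eta> j) \<tau> \<Longrightarrow> (N X, \<eta>) \<in> G \<and> j \<le> length \<eta>"
  by (induction "ProdCall X \<eta> j" \<tau> arbitrary: j rule: cps_call.induct) auto

inductive_cases SymCallE: "cps_call G Trig (SymCall Y) \<tau>"
inductive_cases ProdCallE: "cps_call G Trig (ProdCall X \<eta> j) \<tau>"

lemma cps_call_SymCall_trig:
  "cps_call G Trig (SymCall Y) \<tau> \<Longrightarrow> Y \<in> Trig \<Longrightarrow>
     \<exists>X \<eta> j. call_site G Y X \<eta> j \<and> cps_call G Trig (ProdCall X \<eta> (Suc j)) \<tau>"
  by (erule SymCallE)
    (simp, frule cps_call_ProdCall_production, fastforce simp: call_site_def Suc_le_eq)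

lemma cps_call_ProdCall_trig:
  "cps_call G Trig (ProdCall X \<eta> j) \<tau> \<Longrightarrow> j < length \<eta> \<Longrightarrow> trig Trig (\<eta> ! j) \<Longrightarrow>
     \<tau> = [hat (\<eta> ! j)]"
  by (erule ProdCallE) (auto simp: trig_def)

lemma cps_call_deterministic: "cps_call G Trig c \<tau> \<Longrightarrow> cps_call G Trig c \<tau>' \<Longrightarrow> \<tau>' = \<tau>"
proof (induction arbitrary: \<tau>' rule: cps_call.induct)
  case (trig_sym X \<eta> j \<tau> Y)
  then have "call_site G Y X \<eta> j"
    by (auto simp: call_site_def dest: cps_call_ProdCall_production)
  moreover obtain X' \<eta>' j' where "call_site G Y X' \<eta>' j'" "cps_call G Trig (ProdCall X' \<eta>' (Suc j')) \<tau>'"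
    using cps_call_SymCall_trig trig_sym.prems \<open>Y \<in> Trig\<close> by blast
  ultimately show ?case
    using call_sites_unique \<open>Y \<in> Trig\<close> trig_sym.IH unfolding unique_call_sites_def by blast
next
  case (top Y)
  from top.prems top.hyps show ?case by (auto elim: SymCallE)
next
  case (sym X \<tau> \<eta>)
  from sym.prems show ?case by (cases rule: ProdCallE) (auto dest: sym.IH)
next
  case (nontrig X \<eta> j \<tau>)
  from nontrig.prems show ?case
    using nontrig.hyps by (cases rule: ProdCallE) (auto simp: trig_def dest: nontrig.IH)
next
  case (selfloop X \<eta> j \<tau>)
  then show ?case by (auto simp: trig_def dest: cps_call_ProdCall_trig)
next
  case (trig_prod X \<eta> j \<tau> Y)
  then show ?case by (auto simp: trig_def dest: cps_call_ProdCall_trig)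
qed

lemma cps_call_ProdCall_exists:
  assumes "cps_call G Trig (SymCall X) \<tau>" "(N X, \<eta>) \<in> G" "j \<le> length \<eta>"
  shows "\<exists>\<tau>'. cps_call G Trig (ProdCall X \<eta> j) \<tau>'"
  using assms(3)
proof (induction j rule: inc_induct)
  case base
  from cps_call.sym[OF assms(1,2)] show ?case by blast
next
  case (step j)
  then obtain \<tau>' where call: "cps_call G Trig (ProdCall X \<eta> (Suc j)) \<tau>'" by blast
  have j: "Suc j \<le> length \<eta>" using step.hyps by simp
  show ?case
  proof (cases "trig Trig (\<eta> ! j)")
    case False
    from cps_call.nontrig[OF call j False] show ?thesis by blast
  next
    case True
    then obtain Y where Y: "\<eta> ! j = N Y" "Y \<in> Trig" by (auto simp: trig_def)
    show ?thesis
    proof (cases "Suc j = length \<eta> \<and> Y = X")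
      case True
      with Y cps_call.selfloop[OF call] show ?thesis by blast
    next
      case False
      from cps_call.trig_prod[OF call j Y False] show ?thesis by blast
    qed
  qed
qed

lemma cps_call_SymCall_exists: "N Y \<in> syms G \<Longrightarrow> \<exists>\<tau>. cps_call G Trig (SymCall Y) \<tau>"
proof (induction Y rule: wf_induct_rule[OF wf_callers])
  case (1 Y)
  show ?case
  proof (cases "Y \<in> Trig")
    case True
    with "1.prems" obtain X \<eta> j where site: "call_site G Y X \<eta> j"
      using call_site_exists by blast
    then have "(X, Y) \<in> callers G Trig" "N X \<in> syms G"
      using True by (auto simp: callers_def call_site_def intro: lhs_in_syms)
    with "1.IH" obtain \<tau> where \<tau>: "cps_call G Trig (SymCall X) \<tau>" by blast
    from site have prod: "(N X, \<eta>) \<in> G" and j: "Suc j \<le> length \<eta>" and Y: "\<eta> ! j = N Y"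
      and not_tail: "\<not> (Suc j = length \<eta> \<and> Y = X)"
      by (auto simp: call_site_def)
    from cps_call_ProdCall_exists[OF \<tau> prod j] obtain \<tau>' where "cps_call G Trig (ProdCall X \<eta> (Suc j)) \<tau>'" ..
    from cps_call.trig_sym[OF this j Y True not_tail] show ?thesis ..
  next
    case False
    from cps_call.top[OF "1.prems" False] show ?thesis ..
  qed
qed

lemma tauSym_eq: "cps_call G Trig (SymCall Y) \<tau> \<Longrightarrow> tauSym G Trig (N Y) = \<tau>"
  unfolding tauSym_def by (auto intro: the_equality cps_call_deterministic)

lemma tauProd_eq: "cps_call G Trig (ProdCall X \<eta> j) \<tau> \<Longrightarrow> tauProd G Trig X \<eta> j = \<tau>"
  unfolding tauProd_def by (auto intro: the_equality cps_call_deterministic)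

lemma tauSym_call: "N Y \<in> syms G \<Longrightarrow> cps_call G Trig (SymCall Y) (tauSym G Trig (N Y))"
  using cps_call_SymCall_exists tauSym_eq by metis

lemma tauProd_call:
  assumes "(N X, \<eta>) \<in> G" "j \<le> length \<eta>"
  shows "cps_call G Trig (ProdCall X \<eta> j) (tauProd G Trig X \<eta> j)"
proof -
  from cps_call_ProdCall_exists[OF tauSym_call[OF lhs_in_syms[OF assms(1)]] assms] tauProd_eq show ?thesis by metis
qed

lemma tauSym_nontrig:
  assumes "Z \<in> syms G" "\<not> trig Trig Z"
  shows "tauSym G Trig Z = []"
proof (cases Z)
  case (N Y)
  with assms show ?thesis by (auto simp: trig_def intro: tauSym_eq cps_call.top)
qed (simp add: tauSym_def)

lemma tauProd_length: "(N X, \<eta>) \<in> G \<Longrightarrow> tauProd G Trig X \<eta> (length \<eta>) = tauSym G Trig (N X)"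
  by (rule tauProd_eq, rule cps_call.sym, rule tauSym_call) (auto intro: lhs_in_syms)

lemma tauProd_nontrig:
  "(N X, \<eta>) \<in> G \<Longrightarrow> j < length \<eta> \<Longrightarrow> \<not> trig Trig (\<eta> ! j) \<Longrightarrow>
     tauProd G Trig X \<eta> j = hat (\<eta> ! j) # tauProd G Trig X \<eta> (Suc j)"
  by (rule tauProd_eq, rule cps_call.nontrig, rule tauProd_call) auto

lemma tauProd_trig:
  "(N X, \<eta>) \<in> G \<Longrightarrow> j < length \<eta> \<Longrightarrow> trig Trig (\<eta> ! j) \<Longrightarrow> tauProd G Trig X \<eta> j = [hat (\<eta> ! j)]"
  by (rule cps_call_ProdCall_trig[OF tauProd_call]) auto

lemma tauSym_at_call_site:
  "(N X, \<eta>) \<in> G \<Longrightarrow> j < length \<eta> \<Longrightarrow> \<eta> ! j = N Y \<Longrightarrow> Y \<in> Trig \<Longrightarrow>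
     \<not> (Suc j = length \<eta> \<and> Y = X) \<Longrightarrow> tauSym G Trig (N Y) = tauProd G Trig X \<eta> (Suc j)"
  by (rule tauSym_eq, rule cps_call.trig_sym, rule tauProd_call) auto

lemma cpsGrammar_step: "(N X, \<eta>) \<in> G \<Longrightarrow> step (cpsGrammar G Trig) [Hat X] (tauProd G Trig X \<eta> 0)"
  using tauProd_call[of X \<eta> 0] unfolding cpsGrammar_def step_singleton by blast

lemma cps_derives_tauProd_Suc:
  assumes prod: "(N X, \<eta>) \<in> G" and j: "j < length \<eta>"
    and not_tail: "\<not> (Suc j = length \<eta> \<and> \<eta> ! j = N X \<and> X \<in> Trig)"
    and head: "derivesN (cpsGrammar G Trig) m [hat (\<eta> ! j)] (map CT u @ tauSym G Trig (\<eta> ! j))"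
    and rest: "derivesN (cpsGrammar G Trig) n (tauProd G Trig X \<eta> (Suc j)) v"
  shows "derivesN (cpsGrammar G Trig) (m + n) (tauProd G Trig X \<eta> j) (map CT u @ v)"
proof (cases "trig Trig (\<eta> ! j)")
  case False
  have "\<eta> ! j \<in> syms G"
    using prod j by (auto intro: rhs_in_syms)
  with False derivesN_append[OF head rest] show ?thesis
    using prod j by (simp add: tauProd_nontrig tauSym_nontrig)
next
  case True
  then obtain Y where Y: "\<eta> ! j = N Y" "Y \<in> Trig"
    by (auto simp: trig_def)
  moreover from not_tail Y have "\<not> (Suc j = length \<eta> \<and> Y = X)"
    by auto
  ultimately have "tauSym G Trig (\<eta> ! j) = tauProd G Trig X \<eta> (Suc j)"
    using tauSym_at_call_site[OF prod j] by simp
  with head True prod j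
  have "derivesN (cpsGrammar G Trig) m (tauProd G Trig X \<eta> j) (map CT u @ tauProd G Trig X \<eta> (Suc j))"
    by (simp add: tauProd_trig)
  from this derivesN_prepend[OF rest] show ?thesis
    by (rule derivesN_add)
qed

lemma cps_derives_suffix:
  assumes prod: "(N X, \<eta>) \<in> G" and "j \<le> length \<eta>" and "derivesN G n (drop j \<eta>) (map T w)"
    and symbols: "\<And>m Z v. m \<le> n \<Longrightarrow> Z \<in> syms G \<Longrightarrow> derivesN G m [Z] (map T v) \<Longrightarrow>
        derivesN (cpsGrammar G Trig) m [hat Z] (map CT v @ tauSym G Trig Z)"
  shows "derivesN (cpsGrammar G Trig) n (tauProd G Trig X \<eta> j) (map CT w @ tauSym G Trig (N X))"
  using assms(2-4)
proof (induction j arbitrary: n w rule: inc_induct)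
  case base
  then show ?case by (simp add: derivesN_Nil tauProd_length[OF prod])
next
  case (step j)
  have "derivesN G n ([\<eta> ! j] @ drop (Suc j) \<eta>) (map T w)"
    using step.hyps step.prems(1) by (simp add: Cons_nth_drop_Suc)
  then obtain n1 n2 w1 w2 where n: "n = n1 + n2" and w: "w = w1 @ w2"
    and d1: "derivesN G n1 [\<eta> ! j] (map T w1)" and d2: "derivesN G n2 (drop (Suc j) \<eta>) (map T w2)"
    by (blast dest: derivesN_append_split elim: map_eq_append_conv[THEN iffD1, elim_format])
  have "\<eta> ! j \<in> syms G"
    using prod step.hyps by (auto intro: rhs_in_syms)
  with d1 n step.prems(2) have D1:
    "derivesN (cpsGrammar G Trig) n1 [hat (\<eta> ! j)] (map CT w1 @ tauSym G Trig (\<eta> ! j))"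
    by simp
  from d2 n step.prems(2) have D2:
    "derivesN (cpsGrammar G Trig) n2 (tauProd G Trig X \<eta> (Suc j)) (map CT w2 @ tauSym G Trig (N X))"
    by (intro step.IH) auto
  show ?case
  proof (cases "Suc j = length \<eta> \<and> \<eta> ! j = N X \<and> X \<in> Trig")
    case True
    with d2 have "n2 = 0" "w2 = []"
      by (auto simp: derivesN_Nil)
    moreover have "tauProd G Trig X \<eta> j = [hat (\<eta> ! j)]"
      using prod step.hyps True by (simp add: tauProd_trig trig_def)
    ultimately show ?thesis
      using D1 True n w by simp
  next
    case False
    from cps_derives_tauProd_Suc[OF prod _ False D1 D2] step.hyps n w show ?thesis
      by simp
  qed
qed

lemma cps_derives_symbol:
  "Z \<in> syms G \<Longrightarrow> derivesN G n [Z] (map T w) \<Longrightarrow>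
     derivesN (cpsGrammar G Trig) n [hat Z] (map CT w @ tauSym G Trig Z)"
proof (induction n arbitrary: Z w rule: less_induct)
  case (less n)
  show ?case
  proof (cases Z)
    case (T a)
    with less.prems(2) no_terminal_lhs have "n = 0" "w = [a]"
      by (auto simp: derivesN_no_production)
    with T show ?thesis by (simp add: tauSym_def)
  next
    case (N Y)
    with less.prems(2) obtain m x where n: "n = Suc m" and prod: "(N Y, x) \<in> G"
      and d: "derivesN G m x (map T w)"
      by (cases n) (auto simp: derivesN_Suc step_singleton)
    have "derivesN (cpsGrammar G Trig) m (tauProd G Trig Y x 0) (map CT w @ tauSym G Trig (N Y))"
      using prod d by (intro cps_derives_suffix) (auto intro: less.IH simp: n)
    with cpsGrammar_step[OF prod] N n show ?thesis
      by (auto simp: derivesN_Suc)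
  qed
qed

end

section \<open>Flattened grammars\<close>

fun is_fresh :: "'n nt \<Rightarrow> bool" where
  "is_fresh (Top _) = False"
| "is_fresh (Fresh _ _) = True"

fun rank :: "'n nt \<Rightarrow> nat" where
  "rank (Top _) = 0"
| "rank (Fresh _ q) = Suc (length q)"

lemma nth_concSyms:
  "i < length es \<Longrightarrow> concSyms k p es ! i = (case atom (es ! i) of Some s \<Rightarrow> s | None \<Rightarrow> N (Fresh k (p @ [i])))"
  by (simp add: concSyms_def)

lemma length_concSyms [simp]: "length (concSyms k p es) = length es"
  by (simp add: concSyms_def)

lemma atom_not_fresh: "atom e = Some (N Y) \<Longrightarrow> \<not> is_fresh Y"
  by (cases e) auto

lemma concSyms_fresh:
  "i < length es \<Longrightarrow> concSyms k p es ! i = N Y \<Longrightarrow> is_fresh Y \<Longrightarrow> Y = Fresh k (p @ [i]) \<and> atom (es ! i) = None"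
  by (auto simp: nth_concSyms split: option.splits dest: atom_not_fresh)

lemma flatten_call_site_name:
  "call_site (flatten k X p e) Y A \<eta> j \<Longrightarrow> is_fresh Y \<Longrightarrow> \<exists>q. Y = Fresh k (p @ q) \<and> q \<noteq> []"
  "call_site (flattenConc k p i es) Y A \<eta> j \<Longrightarrow> is_fresh Y \<Longrightarrow>
     \<exists>i' q. i \<le> i' \<and> Y = Fresh k (p @ i' # q) \<and> q \<noteq> []"
  "call_site (flattenAlt k X p i es) Y A \<eta> j \<Longrightarrow> is_fresh Y \<Longrightarrow>
     \<exists>i' q. i \<le> i' \<and> Y = Fresh k (p @ i' # q) \<and> q \<noteq> []"
proof (induction k X p e and k p i es and k X p i es arbitrary: A \<eta> j and A \<eta> j and A \<eta> j
    rule: flatten_flattenConc_flattenAlt.induct)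
  case (3 k X p es)
  then show ?case by (fastforce dest: concSyms_fresh)
next
  case (8 k p i e es)
  then show ?case by (fastforce split: option.splits)
qed (fastforce simp: less_Suc_eq)+

lemma flatten_unique_call_sites:
  fixes e :: "('t, 'n) rexp" and es :: "('t, 'n) rexp list"
  shows "unique_call_sites (flatten k X p e) (Collect is_fresh)"
  "unique_call_sites (flattenConc k p i es) (Collect is_fresh)"
  "unique_call_sites (flattenAlt k X p i es) (Collect is_fresh)"
proof (induction k X p e and k p i es and k X p i es rule: flatten_flattenConc_flattenAlt.induct)
  case (3 k X p es)
  have "unique_call_sites {(N X, concSyms k p es)} (Collect is_fresh)"
    unfolding unique_call_sites_def by (auto dest: concSyms_fresh)
  from unique_call_sites_Un[OF this 3] show ?case
    by (auto dest: concSyms_fresh flatten_call_site_name(2))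
next
  case (5 k X p e)
  then show ?case unfolding unique_call_sites_def by simp
next
  case (6 k X p e)
  let ?S = "{(N X, [N (Fresh k (p @ [0])), N X]), (N X, [])}"
  have star: "unique_call_sites ?S (Collect is_fresh)"
    unfolding unique_call_sites_def by (auto simp: less_Suc_eq)
  have disjoint: "\<not> call_site ?S Y X' \<eta>' j'"
    if "Y \<in> Collect is_fresh" "call_site (flatten k (Fresh k (p @ [0])) (p @ [0]) e) Y X \<eta> j"
    for Y X \<eta> j X' \<eta>' j'
    using flatten_call_site_name(1)[OF that(2)] that(1) by (auto simp: call_site_def less_Suc_eq)
  show ?case
    unfolding flatten.simps by (rule unique_call_sites_Un[OF 6 star disjoint])
next
  case (8 k p i e es)
  then show ?case
    by (auto intro!: unique_call_sites_Un split: option.splits dest!: flatten_call_site_name)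
next
  case (10 k X p i e es)
  then show ?case
    by (auto intro!: unique_call_sites_Un dest!: flatten_call_site_name)
qed (auto simp: unique_call_sites_def)

text \<open>The hypothesis on \<open>X\<close> says that it was created no deeper than the position \<open>p\<close>.\<close>

lemma flatten_callers_rank:
  fixes e :: "('t, 'n) rexp" and es :: "('t, 'n) rexp list"
  shows "rank X \<le> Suc (length p) \<Longrightarrow> callers (flatten k X p e) (Collect is_fresh) \<subseteq> measure rank"
  "callers (flattenConc k p i es) (Collect is_fresh) \<subseteq> measure rank"
  "rank X \<le> Suc (length p) \<Longrightarrow> callers (flattenAlt k X p i es) (Collect is_fresh) \<subseteq> measure rank"
proof (induction k X p e and k p i es and k X p i es rule: flatten_flattenConc_flattenAlt.induct)
  case (3 k X p es)
  then show ?case by (fastforce simp: callers_def dest: concSyms_fresh)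
next
  case (6 k X p e)
  then show ?case by (fastforce simp: callers_def less_Suc_eq)
next
  case (5 k X p e)
  then show ?case by (auto simp: callers_def)
next
  case (8 k p i e es)
  then show ?case by (cases "atom e") auto
next
  case (10 k X p i e es)
  then show ?case by auto
qed (auto simp: callers_def)

lemma flattenConc_eq:
  "flattenConc k p i es = (\<Union>i'\<in>{i'. i' < length es \<and> atom (es ! i') = None}.
     flatten k (Fresh k (p @ [i + i'])) (p @ [i + i']) (es ! i'))"
proof (induction es arbitrary: i)
  case (Cons e es)
  show ?case
    by (auto simp: Cons less_Suc_eq_0_disj split: option.splits)
qed simp

lemma flattenAlt_eq:
  "flattenAlt k X p i es = (\<Union>i'<length es. flatten k X (p @ [i + i']) (es ! i'))"
proof (induction es arbitrary: i)
  case (Cons e es)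
  show ?case
    by (auto simp: Cons less_Suc_eq_0_disj)
qed simp

lemma flatten_fresh_has_call_site:
  fixes e :: "('t, 'n) rexp"
  assumes "N Y \<in> syms (flatten k X p e)" "is_fresh Y" "Y \<noteq> X"
  shows "\<exists>A \<eta> j. call_site (flatten k X p e) Y A \<eta> j"
  using assms
proof (induction e arbitrary: X p)
  case (Conc es)
  have in_concSyms: "\<exists>A \<eta> j. call_site (flatten k X p (Conc es)) Y A \<eta> j"
    if "i < length es" "concSyms k p es ! i = N Y" for i
  proof -
    from that Conc.prems(3) have "call_site (flatten k X p (Conc es)) Y X (concSyms k p es) i"
      by (simp add: call_site_def)
    then show ?thesis by blast
  qed
  from Conc.prems(1,3) consider (here) "N Y \<in> set (concSyms k p es)"
    | (inner) i where "i < length es" "atom (es ! i) = None"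
        "N Y \<in> syms (flatten k (Fresh k (p @ [i])) (p @ [i]) (es ! i))"
    by (auto simp: flattenConc_eq syms_UN)
  then show ?case
  proof cases
    case here
    then obtain i where "i < length es" "concSyms k p es ! i = N Y"
      by (auto simp: in_set_conv_nth)
    then show ?thesis by (rule in_concSyms)
  next
    case (inner i)
    show ?thesis
    proof (cases "Y = Fresh k (p @ [i])")
      case True
      with inner have "concSyms k p es ! i = N Y"
        by (simp add: nth_concSyms)
      with inner(1) show ?thesis by (rule in_concSyms)
    next
      case False
      from Conc.IH[OF nth_mem inner(3) Conc.prems(2) False] inner(1,2) show ?thesis
        by (auto simp: flattenConc_eq)
    qed
  qed
next
  case (Alt es)
  then obtain i where i: "i < length es" and "N Y \<in> syms (flatten k X (p @ [i]) (es ! i))"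
    by (auto simp: flattenAlt_eq syms_UN)
  with Alt.IH[OF nth_mem[OF i]] Alt.prems(2,3) obtain A \<eta> j
    where "call_site (flatten k X (p @ [i]) (es ! i)) Y A \<eta> j"
    by blast
  with i have "call_site (flatten k X p (Alt es)) Y A \<eta> j"
    by (auto simp: flattenAlt_eq)
  then show ?case by blast
next
  case (Opt e)
  then have "N Y \<in> syms (flatten k X (p @ [0]) e)"
    by auto
  with Opt.IH Opt.prems(2,3) obtain A \<eta> j where "call_site (flatten k X (p @ [0]) e) Y A \<eta> j"
    by blast
  then have "call_site (flatten k X p (Opt e)) Y A \<eta> j"
    by (rule call_site_mono) auto
  then show ?case by blast
next
  case (Star e)
  let ?a = "Fresh k (p @ [0])"
  show ?case
  proof (cases "Y = ?a")
    case True
    have "call_site (flatten k X p (Star e)) ?a X [N ?a, N X] 0"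
      by (simp add: call_site_def)
    with True show ?thesis by blast
  next
    case False
    with Star.prems have "N Y \<in> syms (flatten k ?a (p @ [0]) e)"
      by auto
    with Star.IH Star.prems(2) False obtain A \<eta> j where "call_site (flatten k ?a (p @ [0]) e) Y A \<eta> j"
      by blast
    then have "call_site (flatten k X p (Star e)) Y A \<eta> j"
      by (rule call_site_mono) auto
    then show ?thesis by blast
  qed
qed auto

lemma flatten_no_terminal_lhs:
  fixes e :: "('t, 'n) rexp" and es :: "('t, 'n) rexp list"
  shows "(T a, \<beta>) \<notin> flatten k X p e" "(T a, \<beta>) \<notin> flattenConc k p i es"
    "(T a, \<beta>) \<notin> flattenAlt k X p i es"
  by (induction k X p e and k p i es and k X p i es rule: flatten_flattenConc_flattenAlt.induct)
    (auto split: option.splits)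

lemma flattenGrammar_cps_grammar:
  fixes rules :: "('t, 'n) bnf_grammar"
  assumes "\<forall>Y\<in>Trig. cps_eligible (flattenGrammar rules) Y"
  shows "cps_grammar (flattenGrammar rules) Trig"
proof
  define F where "F k = flatten k (Top (fst (rules ! k))) [] (snd (rules ! k))" for k
  have G: "flattenGrammar rules = (\<Union>k<length rules. F k)"
    by (simp add: flattenGrammar_def F_def)
  have Trig_fresh: "Trig \<subseteq> Collect is_fresh"
    using assms by (auto simp: cps_eligible_def)
  show "(T a, \<beta>) \<notin> flattenGrammar rules" for a \<beta>
    by (auto simp: G F_def flatten_no_terminal_lhs)
  txt \<open>Fresh names record the index of the rule that created them, so different rules never
    share a call site.\<close>
  have "X' = X \<and> \<eta>' = \<eta> \<and> j' = j"
    if Y: "Y \<in> Trig" and site: "call_site (F k) Y X \<eta> j" and site': "call_site (F k') Y X' \<eta>' j'"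
    for Y k k' X \<eta> j X' \<eta>' j'
  proof -
    have "is_fresh Y" using Y Trig_fresh by auto
    with site site' have "k' = k"
      unfolding F_def by (auto dest!: flatten_call_site_name(1))
    with site site' \<open>is_fresh Y\<close> flatten_unique_call_sites(1) show ?thesis
      unfolding F_def unique_call_sites_def by blast
  qed
  then show "unique_call_sites (flattenGrammar rules) Trig"
    unfolding unique_call_sites_def G by auto
  show "\<exists>X \<eta> j. call_site (flattenGrammar rules) Y X \<eta> j"
    if Y: "Y \<in> Trig" and in_syms: "N Y \<in> syms (flattenGrammar rules)" for Y
  proof -
    obtain k where "k < length rules" "N Y \<in> syms (F k)"
      using in_syms by (auto simp: G syms_UN)
    moreover have "is_fresh Y" "Y \<noteq> Top (fst (rules ! k))"
      using Y Trig_fresh by auto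
    ultimately obtain X \<eta> j where "call_site (F k) Y X \<eta> j"
      unfolding F_def by (blast dest: flatten_fresh_has_call_site(1))
    with \<open>k < length rules\<close> show ?thesis
      unfolding G by auto
  qed
  have "callers (flattenGrammar rules) Trig \<subseteq> (\<Union>k<length rules. callers (F k) (Collect is_fresh))"
    using Trig_fresh by (auto simp: G callers_def)
  also have "\<dots> \<subseteq> measure rank"
    unfolding F_def by (intro UN_least flatten_callers_rank(1)) simp
  finally show "wf (callers (flattenGrammar rules) Trig)"
    by (rule wf_subset[OF wf_measure])
qed

theorem mainTheorem1:
  fixes rules :: "('t, 'n) bnf_grammar" and Trig :: "'n nt set"
  defines "G \<equiv> flattenGrammar rules"
  assumes "\<forall>Y\<in>Trig. cps_eligible G Y"
  shows "(\<forall>X \<in> syms G. \<forall>w n. derivesN G n [X] (map T w) \<longrightarrow>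
            derivesN (cpsGrammar G Trig) n [hat X] (map CT w @ tauSym G Trig X))
       \<and> (\<forall>X \<eta> j w n. (N X, \<eta>) \<in> G \<longrightarrow> j \<le> length \<eta> \<longrightarrow> derivesN G n (drop j \<eta>) (map T w) \<longrightarrow>
            derivesN (cpsGrammar G Trig) n (tauProd G Trig X \<eta> j) (map CT w @ tauSym G Trig (N X)))"
proof -
  interpret cps_grammar G Trig
    using flattenGrammar_cps_grammar assms unfolding G_def by blast
  show ?thesis
    using cps_derives_symbol by (blast intro: cps_derives_suffix)
qed

end
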